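(* Let $d\ge2$ and let $\mathbf{p}^\star=(1,p_2^\star,\dots,p_d^\star)$ be a maximizer of the problem $$\max\Big\{\frac{\prod_{i=1}^dp_i}{D_1(\mathbf{p})^d}\;:\;\mathbf{p}\in(0,\infty)^d,\ p_1=1,\ D_1(\mathbf{p})^2\ge D_j(\mathbf{p})^2\text{ for all }j\in\{2,\dots,d\}\Big\}.$$ Then $D(\mathbf{p}^\star)=D_1(\mathbf{p}^\star)=D_2(\mathbf{p}^\star)$ and $$p_2^\star=\sqrt{\tfrac13},\qquad p_j^\star=\sqrt{\tfrac23}\,\frac{1}{j-1}\quad\text{for } j\in\{3,\dots,d\}.$$
   Context: For $k\in\{1,\dots,d\}$ let $w_{k,i}=0$ for $i<k$, $w_{k,k}=k$, $w_{k,i}=i-1$ for $k<i\le d$, $D_k(\mathbf{p})=\sqrt{\sum_{i=1}^dw_{k,i}^2p_i^2}$, and $D(\mathbf{p})=\max_{k\in\{1,\dots,d\}}D_k(\mathbf{p})$. *)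

theory Defs
  imports "HOL-Analysis.Analysis"
begin

text \<open>Vectors p in R^d are represented as functions nat => real, only the
  coordinates 1..d are relevant.\<close>

definition w :: "nat \<Rightarrow> nat \<Rightarrow> real" where
  "w k i = (if i < k then 0 else if i = k then real k else real i - 1)"

definition Dk :: "nat \<Rightarrow> nat \<Rightarrow> (nat \<Rightarrow> real) \<Rightarrow> real" where
  "Dk d k p = sqrt (\<Sum>i=1..d. (w k i)^2 * (p i)^2)"

definition Dmax :: "nat \<Rightarrow> (nat \<Rightarrow> real) \<Rightarrow> real" where
  "Dmax d p = Max ((\<lambda>k. Dk d k p) ` {1..d})"

definition feasible :: "nat \<Rightarrow> (nat \<Rightarrow> real) \<Rightarrow> bool" where
  "feasible d p \<longleftrightarrow> (\<forall>i\<in>{1..d}. p i > 0) \<and> p 1 = 1 \<and>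
     (\<forall>j\<in>{2..d}. (Dk d 1 p)^2 \<ge> (Dk d j p)^2)"

definition objective :: "nat \<Rightarrow> (nat \<Rightarrow> real) \<Rightarrow> real" where
  "objective d p = (\<Prod>i=1..d. p i) / (Dk d 1 p)^d"

end

theory Submission
  imports Defs
begin

text \<open>Write \<open>a = p\<^sub>2\<^sup>2\<close> and \<open>y\<^sub>i = ((i - 1) p\<^sub>i)\<^sup>2\<close> for \<open>i \<ge> 3\<close>. With \<open>p\<^sub>1 = 1\<close> the constraint
  \<open>D\<^sub>1 \<ge> D\<^sub>2\<close> says exactly \<open>a \<le> 1/3\<close>, and \<open>D\<^sub>1\<^sup>2 = 1 + a + \<Sum> y\<^sub>i\<close>, so up to a factor depending
  only on \<open>d\<close> the squared objective is \<open>3 a \<Prod> (3 y\<^sub>i / 2) / (3 D\<^sub>1\<^sup>2 / (2 d))\<^sup>d\<close>.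
  For \<open>a \<le> 1/3\<close> we have \<open>3 a \<le> v\<^sup>2\<close> with \<open>v = 3 (1 + a) / 4\<close>, and AM-GM for the \<open>d\<close> numbers
  \<open>v, v, 3 y\<^sub>3 / 2, \<dots>, 3 y\<^sub>d / 2\<close>, whose sum is \<open>3 D\<^sub>1\<^sup>2 / 2\<close>, bounds this ratio by 1, with
  equality only if \<open>a = 1/3\<close> and all \<open>y\<^sub>i = 2/3\<close>. The point \<open>p\<^sup>\<star>\<close> is feasible and attains the
  bound, so every maximizer attains it too.\<close>

lemma sum_ln_le_sum_minus_one:
  fixes t :: "'a \<Rightarrow> real"
  assumes "\<forall>i\<in>I. t i > 0"
  shows "(\<Sum>i\<in>I. ln (t i)) \<le> (\<Sum>i\<in>I. t i - 1)"
  using assms by (intro sum_mono) (simp add: ln_le_minus_one)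

lemma sum_ln_eq_sum_minus_one_imp_eq_1:
  fixes t :: "'a \<Rightarrow> real"
  assumes fin: "finite I" and pos: "\<forall>i\<in>I. t i > 0"
    and eq: "(\<Sum>i\<in>I. ln (t i)) = (\<Sum>i\<in>I. t i - 1)"
  shows "\<forall>i\<in>I. t i = 1"
proof
  fix i assume i: "i \<in> I"
  have gap_nonneg: "0 \<le> t k - 1 - ln (t k)" if "k \<in> I" for k
    using pos that ln_le_minus_one[of "t k"] by simp
  have "(\<Sum>k\<in>I. t k - 1 - ln (t k)) = (\<Sum>k\<in>I. t k - 1) - (\<Sum>k\<in>I. ln (t k))"
    by (rule sum_subtractf)
  then have "(\<Sum>k\<in>I. t k - 1 - ln (t k)) = 0"
    using eq by linarith
  then have "t i - 1 - ln (t i) = 0"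
    using sum_nonneg_0[of I "\<lambda>k. t k - 1 - ln (t k)"] fin gap_nonneg i by blast
  then show "t i = 1"
    using ln_eq_minus_one[of "t i"] pos i by simp
qed

lemma am_gm:
  fixes x :: "'a \<Rightarrow> real"
  assumes fin: "finite I" and ne: "I \<noteq> {}" and pos: "\<forall>i\<in>I. x i > 0"
  defines "m \<equiv> (\<Sum>i\<in>I. x i) / card I"
  shows am_gm_le: "(\<Prod>i\<in>I. x i) \<le> m ^ card I"
    and am_gm_eq_imp_const: "(\<Prod>i\<in>I. x i) = m ^ card I \<Longrightarrow> \<forall>i\<in>I. x i = m"
proof -
  have n: "card I > 0"
    using fin ne by (simp add: card_gt_0_iff)
  have "(\<Sum>i\<in>I. x i) > 0"
    using fin ne pos by (intro sum_pos) auto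
  then have "m > 0"
    unfolding m_def using n by simp
  then have t_pos: "\<forall>i\<in>I. x i / m > 0"
    using pos by simp
  have "(\<Sum>i\<in>I. ln (x i / m)) = (\<Sum>i\<in>I. ln (x i) - ln m)"
    using pos \<open>m > 0\<close> by (intro sum.cong refl) (simp add: ln_divide_pos)
  moreover have "ln (\<Prod>i\<in>I. x i) = (\<Sum>i\<in>I. ln (x i))"
    using fin pos by (intro ln_prod) auto
  ultimately have ln_ratio: "ln (\<Prod>i\<in>I. x i) - ln (m ^ card I) = (\<Sum>i\<in>I. ln (x i / m))"
    by (simp add: ln_realpow sum_subtractf)
  have "(\<Sum>i\<in>I. x i / m - 1) = (\<Sum>i\<in>I. x i) / m - card I"
    by (simp add: sum_subtractf sum_divide_distrib)
  also have "\<dots> = 0"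
    using \<open>(\<Sum>i\<in>I. x i) > 0\<close> n unfolding m_def by simp
  finally have sum_t: "(\<Sum>i\<in>I. x i / m - 1) = 0" .
  then have ln_sum_le: "(\<Sum>i\<in>I. ln (x i / m)) \<le> 0"
    using sum_ln_le_sum_minus_one[OF t_pos] by simp
  have pos_pow: "m ^ card I > 0"
    using \<open>m > 0\<close> by simp
  have prod_pos: "(\<Prod>i\<in>I. x i) > 0"
    using pos by (intro prod_pos) auto
  show "(\<Prod>i\<in>I. x i) \<le> m ^ card I"
    using ln_le_cancel_iff[OF prod_pos pos_pow] ln_ratio ln_sum_le by linarith
  assume "(\<Prod>i\<in>I. x i) = m ^ card I"
  then have "(\<Sum>i\<in>I. ln (x i / m)) = (\<Sum>i\<in>I. x i / m - 1)"
    using ln_ratio sum_t by simp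
  then have "\<forall>i\<in>I. x i / m = 1"
    by (rule sum_ln_eq_sum_minus_one_imp_eq_1[OF fin t_pos])
  then show "\<forall>i\<in>I. x i = m"
    using \<open>m > 0\<close> by simp
qed

lemma sq_mean_bound_of_le_third:
  fixes a :: real
  assumes "a \<le> 1/3"
  shows sq_mean_ge_three_mul: "3 * a \<le> (3 * (1 + a) / 4)^2"
    and sq_mean_eq_three_mul_imp: "3 * a = (3 * (1 + a) / 4)^2 \<Longrightarrow> a = 1/3"
proof -
  have identity: "(3 * (1 + a) / 4)^2 - 3 * a = 3 * ((1 - 3 * a) * (3 - a)) / 16"
    by (simp add: power2_eq_square algebra_simps)
  have "(1 - 3 * a) * (3 - a) \<ge> 0"
    using assms by (intro mult_nonneg_nonneg) auto
  then show "3 * a \<le> (3 * (1 + a) / 4)^2"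
    using identity by simp
  assume "3 * a = (3 * (1 + a) / 4)^2"
  then have "(1 - 3 * a) * (3 - a) = 0"
    using identity by simp
  then show "a = 1/3"
    using assms by auto
qed

lemma capped_am_gm:
  fixes a :: real and y :: "nat \<Rightarrow> real"
  assumes d2: "2 \<le> d" and a_pos: "0 < a" and a_le: "a \<le> 1/3"
    and y_pos: "\<forall>i\<in>{3..d}. y i > 0"
  defines "M \<equiv> (3 * (1 + a + (\<Sum>i=3..d. y i)) / (2 * d)) ^ d"
  shows capped_am_gm_le: "3 * a * (\<Prod>i=3..d. 3/2 * y i) \<le> M"
    and capped_am_gm_eq_imp:
      "3 * a * (\<Prod>i=3..d. 3/2 * y i) = M \<Longrightarrow> a = 1/3 \<and> (\<forall>i\<in>{3..d}. y i = 2/3)"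
proof -
  define v where "v = 3 * (1 + a) / 4"
  define x where "x i = (if i \<le> 2 then v else 3/2 * y i)" for i :: nat
  have split: "{1..d} = insert 1 (insert 2 {3..d})"
    using d2 by auto
  have prod_tail: "(\<Prod>i=3..d. x i) = (\<Prod>i=3..d. 3/2 * y i)"
    by (rule prod.cong) (simp_all add: x_def)
  have sum_tail: "(\<Sum>i=3..d. x i) = 3/2 * (\<Sum>i=3..d. y i)"
    by (simp add: x_def sum_distrib_left)
  have prod_x: "(\<Prod>i=1..d. x i) = v^2 * (\<Prod>i=3..d. 3/2 * y i)"
    unfolding split by (simp add: prod_tail x_def power2_eq_square)
  have "(\<Sum>i=1..d. x i) = 3/2 * (1 + a + (\<Sum>i=3..d. y i))"
    unfolding split by (simp add: sum_tail) (simp add: x_def v_def algebra_simps)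
  then have "(\<Sum>i=1..d. x i) / card {1..d} = 3 * (1 + a + (\<Sum>i=3..d. y i)) / (2 * d)"
    using d2 by (simp add: field_simps)
  then have M_eq: "M = ((\<Sum>i=1..d. x i) / card {1..d}) ^ card {1..d}"
    by (simp add: M_def)
  have x_pos: "\<forall>i\<in>{1..d}. x i > 0"
    using a_pos y_pos by (auto simp: x_def v_def)
  have P_pos: "(\<Prod>i=3..d. 3/2 * y i) > 0"
    using y_pos by (intro prod_pos) auto
  have am_gm_x: "(\<Prod>i=1..d. x i) \<le> M"
    unfolding M_eq using d2 x_pos by (intro am_gm_le) auto
  have "3 * a * (\<Prod>i=3..d. 3/2 * y i) \<le> (\<Prod>i=1..d. x i)"
    unfolding prod_x v_def using sq_mean_ge_three_mul[OF a_le] P_pos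
    by (intro mult_right_mono) auto
  then show "3 * a * (\<Prod>i=3..d. 3/2 * y i) \<le> M"
    using am_gm_x by linarith
  assume "3 * a * (\<Prod>i=3..d. 3/2 * y i) = M"
  with \<open>3 * a * (\<Prod>i=3..d. 3/2 * y i) \<le> (\<Prod>i=1..d. x i)\<close> am_gm_x
  have "3 * a * (\<Prod>i=3..d. 3/2 * y i) = v^2 * (\<Prod>i=3..d. 3/2 * y i)"
    and prod_eq: "(\<Prod>i=1..d. x i) = M"
    unfolding prod_x by linarith+
  then have "3 * a = v^2"
    using P_pos by (metis mult_right_cancel less_irrefl)
  then have a: "a = 1/3"
    unfolding v_def by (rule sq_mean_eq_three_mul_imp[OF a_le])
  have "{1..d} \<noteq> {}"
    using d2 by simp
  then have x_const: "\<forall>i\<in>{1..d}. x i = (\<Sum>i=1..d. x i) / card {1..d}"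
    using prod_eq unfolding M_eq by (rule am_gm_eq_imp_const[OF finite_atLeastAtMost _ x_pos])
  have one: "1 \<in> {1..d}"
    using d2 by simp
  have "y i = 2/3" if i: "i \<in> {3..d}" for i
  proof -
    have "i \<in> {1..d}" and "\<not> i \<le> 2"
      using i by auto
    then have "3/2 * y i = x 1"
      using x_const[rule_format, OF one] x_const[rule_format, of i] by (simp add: x_def)
    then show ?thesis
      using a by (simp add: x_def v_def)
  qed
  with a show "a = 1/3 \<and> (\<forall>i\<in>{3..d}. y i = 2/3)"
    by simp
qed

lemma Dk_sq: "(Dk d k q)^2 = (\<Sum>i=1..d. (w k i)^2 * (q i)^2)"
  unfolding Dk_def by (rule real_sqrt_pow2) (intro sum_nonneg, simp)

lemma Dk_nonneg: "Dk d k q \<ge> 0"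
  unfolding Dk_def by (intro real_sqrt_ge_zero sum_nonneg) simp

lemma Dk_1_sq:
  assumes "2 \<le> d"
  shows "(Dk d 1 q)^2 = (q 1)^2 + (q 2)^2 + (\<Sum>i=3..d. ((real i - 1) * q i)^2)"
proof -
  have "{1..d} = insert 1 (insert 2 {3..d})"
    using assms by auto
  moreover have "(\<Sum>i=3..d. (w 1 i)^2 * (q i)^2) = (\<Sum>i=3..d. ((real i - 1) * q i)^2)"
    by (intro sum.cong) (auto simp: w_def power_mult_distrib)
  ultimately show ?thesis
    unfolding Dk_sq by (simp add: w_def)
qed

lemma Dk_1_sq_minus_Dk_sq:
  assumes "2 \<le> j" "j \<le> d"
  shows "(Dk d 1 q)^2 - (Dk d j q)^2 = (\<Sum>i=1..<j. (w 1 i * q i)^2) - (2 * real j - 1) * (q j)^2"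
proof -
  define f where "f i = (w 1 i)^2 * (q i)^2 - (w j i)^2 * (q i)^2" for i
  have split: "{1..d} = {1..<j} \<union> insert j {j<..d}"
    using assms by auto
  have "(\<Sum>i=1..<j. f i) = (\<Sum>i=1..<j. (w 1 i * q i)^2)"
    by (intro sum.cong) (auto simp: f_def w_def power_mult_distrib)
  moreover have "f j = - (2 * real j - 1) * (q j)^2"
    using assms by (simp add: f_def w_def power2_eq_square algebra_simps)
  moreover have "(\<Sum>i\<in>{j<..d}. f i) = 0"
    using assms by (intro sum.neutral) (auto simp: f_def w_def)
  moreover have "(\<Sum>i=1..d. f i) = (\<Sum>i=1..<j. f i) + (f j + (\<Sum>i\<in>{j<..d}. f i))"
    unfolding split by (subst sum.union_disjoint) auto
  ultimately have "(\<Sum>i=1..d. f i) = (\<Sum>i=1..<j. (w 1 i * q i)^2) - (2 * real j - 1) * (q j)^2"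
    by (simp add: algebra_simps)
  then show ?thesis
    by (simp add: Dk_sq f_def sum_subtractf)
qed

lemma Dk_1_sq_minus_Dk_2_sq:
  assumes "2 \<le> d"
  shows "(Dk d 1 q)^2 - (Dk d 2 q)^2 = (q 1)^2 - 3 * (q 2)^2"
proof -
  have "{1..<2::nat} = {1}"
    by auto
  then show ?thesis
    using Dk_1_sq_minus_Dk_sq[OF order.refl assms, of q] by (simp add: w_def)
qed

lemma feasible_imp_Dmax_eq:
  assumes "1 \<le> d" "feasible d q"
  shows "Dmax d q = Dk d 1 q"
  unfolding Dmax_def
proof (rule Max_eqI)
  fix z assume "z \<in> (\<lambda>k. Dk d k q) ` {1..d}"
  then obtain k where k: "k \<in> {1..d}" "z = Dk d k q"
    by auto
  show "z \<le> Dk d 1 q"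
  proof (cases "k = 1")
    case False
    then have "(Dk d k q)^2 \<le> (Dk d 1 q)^2"
      using assms(2) k unfolding feasible_def by auto
    then show ?thesis
      using k power2_le_imp_le Dk_nonneg by metis
  qed (use k in simp)
qed (use assms(1) in auto)

lemma objective_pos:
  assumes "2 \<le> d" "feasible d q"
  shows "objective d q > 0"
proof -
  have "(Dk d 1 q)^2 \<ge> 1"
    using assms sum_nonneg[of "{3..d}" "\<lambda>i. ((real i - 1) * q i)^2"]
    unfolding Dk_1_sq[OF assms(1)] feasible_def by simp
  then have "Dk d 1 q > 0"
    using Dk_nonneg[of d 1 q] by (cases "Dk d 1 q = 0") auto
  moreover have "(\<Prod>i=1..d. q i) > 0"
    using assms(2) unfolding feasible_def by (intro prod_pos) auto
  ultimately show ?thesis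
    unfolding objective_def by simp
qed

definition p_star :: "nat \<Rightarrow> real" where
  "p_star i = (if i = 1 then 1 else if i = 2 then sqrt (1/3) else sqrt (2/3) * (1 / (real i - 1)))"

lemma p_star_weighted_sq: "3 \<le> i \<Longrightarrow> ((real i - 1) * p_star i)^2 = 2/3"
  by (simp add: p_star_def power_mult_distrib power_divide)

lemma feasible_p_star: "feasible d p_star"
  unfolding feasible_def
proof (intro conjI ballI)
  fix j assume j: "j \<in> {2..d}"
  show "(Dk d j p_star)^2 \<le> (Dk d 1 p_star)^2"
  proof (cases "j = 2")
    case True
    then show ?thesis
      using Dk_1_sq_minus_Dk_2_sq[of d p_star] j by (simp add: p_star_def)
  next
    case False
    then have j3: "3 \<le> j" "j \<le> d"
      using j by auto
    have "(\<Sum>i\<in>{1,2}. (w 1 i * p_star i)^2) \<le> (\<Sum>i=1..<j. (w 1 i * p_star i)^2)"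
      using j3 by (intro sum_mono2) auto
    then have head_ge: "4/3 \<le> (\<Sum>i=1..<j. (w 1 i * p_star i)^2)"
      by (simp add: w_def p_star_def power_mult_distrib)
    have j_pos: "real j - 1 > 0"
      using j3 by simp
    have "(p_star j)^2 = ((real j - 1) * p_star j)^2 / (real j - 1)^2"
      using j_pos by (simp add: power_mult_distrib)
    then have p_sq: "(p_star j)^2 = (2/3) / (real j - 1)^2"
      using p_star_weighted_sq[OF j3(1)] by simp
    have "2 * (real j - 1)^2 - (2 * real j - 1) = 2 * real j * (real j - 3) + 3"
      by (simp add: power2_eq_square algebra_simps)
    moreover have "real j * (real j - 3) \<ge> 0"
      using j3 by simp
    ultimately have ratio_le: "(2 * real j - 1) / (real j - 1)^2 \<le> 2"
      using j_pos by (simp add: pos_divide_le_eq)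
    have "(2 * real j - 1) * (p_star j)^2 = 2/3 * ((2 * real j - 1) / (real j - 1)^2)"
      unfolding p_sq by simp
    with ratio_le have tail_le: "(2 * real j - 1) * (p_star j)^2 \<le> 4/3"
      by linarith
    show ?thesis
      using Dk_1_sq_minus_Dk_sq[OF _ j3(2), of p_star] j3 head_ge tail_le by simp
  qed
qed (auto simp: p_star_def)

lemma feasible_imp_sq_2_le_third:
  assumes "2 \<le> d" "feasible d q"
  shows "(q 2)^2 \<le> 1/3"
  using assms Dk_1_sq_minus_Dk_2_sq[OF assms(1), of q] unfolding feasible_def by force

definition amgm_ratio :: "nat \<Rightarrow> (nat \<Rightarrow> real) \<Rightarrow> real" where
  "amgm_ratio d q = 3 * (q 2)^2 * (\<Prod>i=3..d. 3/2 * ((real i - 1) * q i)^2) /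
     (3 * (1 + (q 2)^2 + (\<Sum>i=3..d. ((real i - 1) * q i)^2)) / (2 * d)) ^ d"

lemma objective_sq_proportional:
  assumes d2: "2 \<le> d"
  shows "\<exists>c>0. \<forall>q. feasible d q \<longrightarrow> c * (objective d q)^2 = amgm_ratio d q"
proof (intro exI[of _ "3 * (\<Prod>i=3..d. 3/2 * (real i - 1)^2) * (2 * d / 3) ^ d"] conjI allI impI)
  show "0 < 3 * (\<Prod>i=3..d. 3/2 * (real i - 1)^2) * (2 * d / 3) ^ d"
    using d2 by (intro mult_pos_pos prod_pos) auto
  fix q assume f: "feasible d q"
  define T where "T = 1 + (q 2)^2 + (\<Sum>i=3..d. ((real i - 1) * q i)^2)"
  have q1: "q 1 = 1"
    using f by (simp add: feasible_def)
  have DT: "(Dk d 1 q)^2 = T"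
    unfolding T_def Dk_1_sq[OF d2] q1 by simp
  have "(Dk d 1 q ^ d)^2 = ((Dk d 1 q)^2) ^ d"
    by (simp add: power_mult[symmetric] mult.commute)
  moreover have "(\<Prod>i=1..d. q i)^2 = (q 2)^2 * (\<Prod>i=3..d. (q i)^2)"
  proof -
    have split: "{1..d} = insert 1 (insert 2 {3..d})"
      using d2 by auto
    show ?thesis
      unfolding prod_power_distrib split using q1 by simp
  qed
  ultimately have obj_sq: "(objective d q)^2 = (q 2)^2 * (\<Prod>i=3..d. (q i)^2) / T ^ d"
    unfolding objective_def power_divide DT by simp
  have "(\<Prod>i=3..d. 3/2 * ((real i - 1) * q i)^2)
      = (\<Prod>i=3..d. 3/2 * (real i - 1)^2) * (\<Prod>i=3..d. (q i)^2)"
    unfolding prod.distrib[symmetric] by (intro prod.cong) (simp_all add: power_mult_distrib)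
  then show "3 * (\<Prod>i=3..d. 3/2 * (real i - 1)^2) * (2 * d / 3) ^ d * (objective d q)^2
      = amgm_ratio d q"
    unfolding amgm_ratio_def T_def[symmetric] obj_sq using d2
    by (simp add: power_divide power_mult_distrib field_simps)
qed

lemma amgm_ratio_le_one:
  assumes d2: "2 \<le> d" and f: "feasible d q"
  shows "amgm_ratio d q \<le> 1"
    and amgm_ratio_eq_one_imp:
      "amgm_ratio d q = 1 \<Longrightarrow> (q 2)^2 = 1/3 \<and> (\<forall>i\<in>{3..d}. ((real i - 1) * q i)^2 = 2/3)"
proof -
  have q_pos: "\<forall>i\<in>{1..d}. q i > 0"
    using f by (simp add: feasible_def)
  then have "q 2 > 0"
    using d2 by auto
  then have a_pos: "(q 2)^2 > 0"
    by simp
  have y_pos: "\<forall>i\<in>{3..d}. ((real i - 1) * q i)^2 > 0"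
  proof
    fix i assume "i \<in> {3..d}"
    then have "q i > 0" and "real i - 1 > 0"
      using q_pos by auto
    then show "((real i - 1) * q i)^2 > 0"
      by simp
  qed
  note bound = capped_am_gm[OF d2 a_pos feasible_imp_sq_2_le_third[OF d2 f] y_pos]
  have "(\<Sum>i=3..d. ((real i - 1) * q i)^2) \<ge> 0"
    by (intro sum_nonneg) simp
  then have "1 + (q 2)^2 + (\<Sum>i=3..d. ((real i - 1) * q i)^2) > 0"
    using a_pos by linarith
  then have M_pos: "(3 * (1 + (q 2)^2 + (\<Sum>i=3..d. ((real i - 1) * q i)^2)) / (2 * d)) ^ d > 0"
    using d2 by simp
  show "amgm_ratio d q \<le> 1"
    unfolding amgm_ratio_def divide_le_eq_1_pos[OF M_pos] by (rule bound(1))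
  assume "amgm_ratio d q = 1"
  then show "(q 2)^2 = 1/3 \<and> (\<forall>i\<in>{3..d}. ((real i - 1) * q i)^2 = 2/3)"
    unfolding amgm_ratio_def divide_eq_1_iff by (intro bound(2)) simp
qed

lemma amgm_ratio_p_star:
  assumes "2 \<le> d"
  shows "amgm_ratio d p_star = 1"
proof -
  have prod_one: "(\<Prod>i=3..d. 3/2 * ((real i - 1) * p_star i)^2) = 1"
    by (intro prod.neutral) (simp add: p_star_weighted_sq)
  have sum_eq: "(\<Sum>i=3..d. ((real i - 1) * p_star i)^2) = 2/3 * (real d - 2)"
    using assms by (simp add: p_star_weighted_sq of_nat_diff)
  have p_2: "(p_star 2)^2 = 1/3"
    by (simp add: p_star_def)
  have "3 * (1 + (p_star 2)^2 + (\<Sum>i=3..d. ((real i - 1) * p_star i)^2)) / (2 * d) = 1"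
    unfolding p_2 sum_eq using assms by (simp add: field_simps)
  then show ?thesis
    unfolding amgm_ratio_def prod_one p_2 by simp
qed

lemma sq_mult_eq_imp_eq_sqrt:
  fixes c x b :: real
  assumes "c > 0" "x > 0" "(c * x)^2 = b"
  shows "x = sqrt b * (1 / c)"
proof -
  have "sqrt b = c * x"
    using assms by (intro real_sqrt_unique) auto
  then show ?thesis
    using assms(1) by simp
qed

lemma maximizer_amgm_ratio_eq_one:
  assumes d2: "2 \<le> d" and f: "feasible d p"
    and max: "\<forall>q. feasible d q \<longrightarrow> objective d q \<le> objective d p"
  shows "amgm_ratio d p = 1"
proof -
  obtain c where "c > 0" and scaled: "\<forall>q. feasible d q \<longrightarrow> c * (objective d q)^2 = amgm_ratio d q"
    using objective_sq_proportional[OF d2] by blast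
  have "objective d p_star \<le> objective d p"
    using max feasible_p_star by blast
  then have "(objective d p_star)^2 \<le> (objective d p)^2"
    using objective_pos[OF d2 feasible_p_star] by (simp add: power_mono)
  then have "c * (objective d p_star)^2 \<le> c * (objective d p)^2"
    using \<open>c > 0\<close> by simp
  then have "amgm_ratio d p_star \<le> amgm_ratio d p"
    unfolding scaled[rule_format, OF f] scaled[rule_format, OF feasible_p_star] .
  then show ?thesis
    using amgm_ratio_le_one[OF d2 f] amgm_ratio_p_star[OF d2] by simp
qed

theorem lemma7:
  fixes d :: nat and p :: "nat \<Rightarrow> real"
  assumes "d \<ge> 2"
    and "feasible d p"
    and "\<forall>q. feasible d q \<longrightarrow> objective d q \<le> objective d p"
  shows "Dmax d p = Dk d 1 p \<and> Dk d 1 p = Dk d 2 p \<and>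
         p 2 = sqrt (1/3) \<and>
         (\<forall>j\<in>{3..d}. p j = sqrt (2/3) * (1 / (real j - 1)))"
proof -
  note d2 = assms(1) and f = assms(2)
  have "amgm_ratio d p = 1"
    using maximizer_amgm_ratio_eq_one[OF assms] .
  then have p_2: "(p 2)^2 = 1/3" and p_tail: "\<forall>j\<in>{3..d}. ((real j - 1) * p j)^2 = 2/3"
    using amgm_ratio_eq_one_imp[OF d2 f] by simp_all
  have p_pos: "\<forall>i\<in>{1..d}. p i > 0" and "p 1 = 1"
    using f by (auto simp: feasible_def)
  have "p 2 > 0"
    using p_pos d2 by auto
  then have "p 2 = sqrt (1/3)"
    using p_2 by (intro real_sqrt_unique[symmetric]) auto
  moreover have "\<forall>j\<in>{3..d}. p j = sqrt (2/3) * (1 / (real j - 1))"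
  proof
    fix j assume j: "j \<in> {3..d}"
    then have "real j - 1 > 0" and "p j > 0"
      using p_pos by auto
    then show "p j = sqrt (2/3) * (1 / (real j - 1))"
      using p_tail j by (intro sq_mult_eq_imp_eq_sqrt) auto
  qed
  moreover have "Dk d 1 p = Dk d 2 p"
  proof (rule power2_eq_imp_eq[OF _ Dk_nonneg Dk_nonneg])
    show "(Dk d 1 p)^2 = (Dk d 2 p)^2"
      using Dk_1_sq_minus_Dk_2_sq[OF d2, of p] \<open>p 1 = 1\<close> p_2 by simp
  qed
  moreover have "Dmax d p = Dk d 1 p"
    using d2 f by (intro feasible_imp_Dmax_eq) auto
  ultimately show ?thesis
    by blast
qed

end
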